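(* Let $G=(V,T,P,S)$ be a context-free grammar, let $W\subseteq V$, and let $F\subseteq W^*$ be a regular language. Then the language $L(G,F)$ of $G$ finalized by $F$ is context-free.
   Context: A context-free grammar $G=(V,T,P,S)$ has total alphabet $V$, terminal alphabet $T\subseteq V$, nonterminal alphabet $N=V-T$, finite rule set $P\subseteq N\times V^*$, start symbol $S\in N$; $\Rightarrow^*$ is its derivation relation and $\phi(G)=\{w\in V^*\mid S\Rightarrow^* w\}$ is its set of sentential forms. For $X\subseteq V$, $\pi_X$ denotes the homomorphism from $V^*$ to $X^*$ with $\pi_X(a)=a$ for $a\in X$ and $\pi_X(a)=\varepsilon$ for $a\in V-X$. For $W\subseteq V$ and $F\subseteq W^*$, set $\phi(G,F)=\{x\in\phi(G)\mid \pi_W(x)\in F\}$ and $L(G,F)=\{\pi_T(y)\mid y\in\phi(G,F),\ \pi_{N-W}(y)=\varepsilon\}$ (the language of $G$ finalized by $F$). *)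

theory Defs
  imports Main
begin

record 'a grammar =
  Vs :: "'a set"
  Ts :: "'a set"
  Ps :: "('a \<times> 'a list) set"
  St :: 'a

definition Ns :: "('a, 'b) grammar_scheme \<Rightarrow> 'a set" where
  "Ns G = Vs G - Ts G"

definition cfg :: "('a, 'b) grammar_scheme \<Rightarrow> bool" where
  "cfg G \<longleftrightarrow> finite (Vs G) \<and> Ts G \<subseteq> Vs G \<and> St G \<in> Ns G \<and> finite (Ps G)
     \<and> (\<forall>(A, \<alpha>) \<in> Ps G. A \<in> Ns G \<and> set \<alpha> \<subseteq> Vs G)"

definition step :: "('a, 'b) grammar_scheme \<Rightarrow> 'a list \<Rightarrow> 'a list \<Rightarrow> bool" where
  "step G u v \<longleftrightarrow> (\<exists>x A \<alpha> y. (A, \<alpha>) \<in> Ps G \<and> u = x @ [A] @ y \<and> v = x @ \<alpha> @ y)"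

definition derives :: "('a, 'b) grammar_scheme \<Rightarrow> 'a list \<Rightarrow> 'a list \<Rightarrow> bool" where
  "derives G = (step G)\<^sup>*\<^sup>*"

definition sentential :: "('a, 'b) grammar_scheme \<Rightarrow> 'a list set" where
  "sentential G = {w. derives G [St G] w}"

definition proj :: "'a set \<Rightarrow> 'a list \<Rightarrow> 'a list" where
  "proj X w = filter (\<lambda>a. a \<in> X) w"

definition lang :: "('a, 'b) grammar_scheme \<Rightarrow> 'a list set" where
  "lang G = {w. w \<in> lists (Ts G) \<and> derives G [St G] w}"

definition sentential_fin :: "('a, 'b) grammar_scheme \<Rightarrow> 'a set \<Rightarrow> 'a list set \<Rightarrow> 'a list set" where
  "sentential_fin G W F = {x \<in> sentential G. proj W x \<in> F}"

definition lang_fin :: "('a, 'b) grammar_scheme \<Rightarrow> 'a set \<Rightarrow> 'a list set \<Rightarrow> 'a list set" where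
  "lang_fin G W F = {proj (Ts G) y | y. y \<in> sentential_fin G W F \<and> proj (Ns G - W) y = []}"

text \<open>Context-free languages: generated by some context-free grammar; the grammar's
  symbols are of type 'a + nat, terminals of L embedded via Inl (fresh nonterminals
  are thus always available).\<close>
definition context_free :: "'a list set \<Rightarrow> bool" where
  "context_free L \<longleftrightarrow> (\<exists>G :: ('a + nat) grammar. cfg G \<and> lang G = map Inl ` L)"

datatype 'a rexp = Zero | One | Atom 'a | Plus "'a rexp" "'a rexp"
  | Times "'a rexp" "'a rexp" | Star "'a rexp"

definition conc :: "'a list set \<Rightarrow> 'a list set \<Rightarrow> 'a list set" where
  "conc A B = {u @ v | u v. u \<in> A \<and> v \<in> B}"

inductive_set star :: "'a list set \<Rightarrow> 'a list set" for A where
  star_Nil: "[] \<in> star A"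
| star_app: "u \<in> A \<Longrightarrow> v \<in> star A \<Longrightarrow> u @ v \<in> star A"

fun rlang :: "'a rexp \<Rightarrow> 'a list set" where
  "rlang Zero = {}"
| "rlang One = {[]}"
| "rlang (Atom a) = {[a]}"
| "rlang (Plus r s) = rlang r \<union> rlang s"
| "rlang (Times r s) = conc (rlang r) (rlang s)"
| "rlang (Star r) = star (rlang r)"

definition regular :: "'a list set \<Rightarrow> bool" where
  "regular L \<longleftrightarrow> (\<exists>r. rlang r = L)"

end

theory Submission
  imports Defs "HOL-Library.Sublist"
begin

text \<open>A regular language \<open>F\<close> has only finitely many left quotients \<open>u\<^sup>-\<^sup>1F\<close>. Annotate every
  symbol \<open>A\<close> of \<open>G\<close> with a pair of quotients \<open>(p, A, q)\<close>, meaning that \<open>A\<close> is to be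
  rewritten into a finalized form whose \<open>W\<close>-projection \<open>w\<close> satisfies \<open>q = w\<^sup>-\<^sup>1p\<close>. The rules
  of \<open>G\<close> lift to the annotated symbols, and symbols of \<open>T \<union> W\<close> may be finalized on the spot,
  emitting their terminal part and advancing the quotient. A derivation of the new grammar
  from its start symbol then tracks a derivation of \<open>G\<close> together with the quotient of \<open>F\<close>
  by the \<open>W\<close>-projection of the finalized part, and the final word is accepted exactly when
  the last quotient contains the empty word, i.e. when that projection lies in \<open>F\<close>.\<close>

section \<open>Derivations and renaming\<close>

lemma derives_lists_Vs:
  assumes "cfg G" "derives G u v" "u \<in> lists (Vs G)"
  shows "v \<in> lists (Vs G)"
  using assms(2,3) unfolding derives_def
proof (induction rule: rtranclp_induct)
  case (step y z)
  then obtain x A \<alpha> w where "(A, \<alpha>) \<in> Ps G" "y = x @ [A] @ w" "z = x @ \<alpha> @ w"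
    by (auto simp: step_def)
  with assms(1) step.IH step.prems show ?case
    unfolding cfg_def by auto
qed simp

lemma step_ruleI: "(A, \<alpha>) \<in> Ps G \<Longrightarrow> step G (x @ [A] @ y) (x @ \<alpha> @ y)"
  unfolding step_def by blast

definition rename_grammar :: "('b \<Rightarrow> 'c) \<Rightarrow> 'b grammar \<Rightarrow> 'c grammar" where
  "rename_grammar f G =
    \<lparr>Vs = f ` Vs G, Ts = f ` Ts G, Ps = (\<lambda>(A, \<alpha>). (f A, map f \<alpha>)) ` Ps G, St = f (St G)\<rparr>"

lemma step_rename: "step G u v \<Longrightarrow> step (rename_grammar f G) (map f u) (map f v)"
  unfolding step_def rename_grammar_def by fastforce

lemma derives_rename: "derives G u v \<Longrightarrow> derives (rename_grammar f G) (map f u) (map f v)"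
  unfolding derives_def
  by (induction rule: rtranclp_induct) (auto intro: rtranclp.rtrancl_into_rtrancl step_rename)

lemma derives_rename_inv:
  assumes cfg: "cfg G" and inj: "inj_on f (Vs G)" and u: "u \<in> lists (Vs G)"
    and "derives (rename_grammar f G) (map f u) w"
  shows "\<exists>v. w = map f v \<and> derives G u v"
  using assms(4) unfolding derives_def
proof (induction rule: rtranclp_induct)
  case (step y z)
  from step.IH obtain v where v: "y = map f v" "(step G)\<^sup>*\<^sup>* u v" by blast
  have "v \<in> lists (Vs G)"
    using derives_lists_Vs[OF cfg _ u] v(2) unfolding derives_def by blast
  from step.hyps(2) obtain x A \<alpha> y' where
    r: "(A, \<alpha>) \<in> Ps G" "y = x @ [f A] @ y'" "z = x @ map f \<alpha> @ y'"
    by (auto simp: step_def rename_grammar_def)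
  from v(1) r(2) have "map f v = x @ [f A] @ y'" by simp
  then obtain x0 A0 y0 where
    s: "v = x0 @ [A0] @ y0" "map f x0 = x" "f A0 = f A" "map f y0 = y'"
    by (auto simp: map_eq_append_conv)
  have "A0 = A"
    using inj s(3) \<open>v \<in> lists (Vs G)\<close> s(1) r(1) cfg
    unfolding cfg_def Ns_def by (auto dest: inj_onD)
  then have "step G v (x0 @ \<alpha> @ y0)"
    using s(1) r(1) unfolding step_def by blast
  moreover have "z = map f (x0 @ \<alpha> @ y0)" using r(3) s by simp
  ultimately show ?case using v(2) by (blast intro: rtranclp.rtrancl_into_rtrancl)
qed auto

lemma Ns_rename:
  assumes "cfg G" "inj_on f (Vs G)"
  shows "Ns (rename_grammar f G) = f ` Ns G"
  using assms inj_on_image_set_diff[of f "Vs G" "Vs G" "Ts G"]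
  unfolding cfg_def Ns_def rename_grammar_def by simp

lemma cfg_rename:
  assumes "cfg G" "inj_on f (Vs G)"
  shows "cfg (rename_grammar f G)"
  using assms Ns_rename[OF assms] unfolding cfg_def
  by (fastforce simp: rename_grammar_def)

lemma lang_rename:
  assumes cfg: "cfg G" and inj: "inj_on f (Vs G)"
  shows "lang (rename_grammar f G) = map f ` lang G"
proof
  have S: "[St G] \<in> lists (Vs G)" and T: "Ts G \<subseteq> Vs G"
    using cfg unfolding cfg_def Ns_def by auto
  show "lang (rename_grammar f G) \<subseteq> map f ` lang G"
  proof
    fix w assume "w \<in> lang (rename_grammar f G)"
    then have w: "w \<in> lists (f ` Ts G)" "derives (rename_grammar f G) (map f [St G]) w"
      by (auto simp: lang_def rename_grammar_def)
    obtain v where v: "w = map f v" "derives G [St G] v"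
      using derives_rename_inv[OF cfg inj S w(2)] by blast
    have "v \<in> lists (Vs G)" using derives_lists_Vs[OF cfg v(2) S] .
    with w(1) v(1) inj T have "v \<in> lists (Ts G)"
      by (auto simp: inj_on_image_mem_iff)
    with v show "w \<in> map f ` lang G" by (auto simp: lang_def)
  qed
  show "map f ` lang G \<subseteq> lang (rename_grammar f G)"
    using derives_rename[of G "[St G]" _ f]
    by (fastforce simp: lang_def rename_grammar_def)
qed

text \<open>The fixed symbol type \<open>'a + nat\<close> of \<^const>\<open>context_free\<close> is no restriction:
  finitely many nonterminals of any type can be renamed injectively into \<open>nat\<close>.\<close>
lemma context_free_of_grammar:
  fixes G :: "('a + 'n) grammar"
  assumes cfg: "cfg G" and L: "lang G = map Inl ` L"
  shows "context_free L"
proof -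
  have "finite (Inr -` Vs G)"
    using cfg finite_vimageI[OF _ inj_Inr] unfolding cfg_def by blast
  then obtain enc :: "'n \<Rightarrow> nat" where enc: "inj_on enc (Inr -` Vs G)"
    using finite_imp_inj_to_nat_seg by blast
  define f :: "'a + 'n \<Rightarrow> 'a + nat" where "f = map_sum id enc"
  have inj: "inj_on f (Vs G)"
  proof (rule inj_onI)
    fix x y assume "x \<in> Vs G" "y \<in> Vs G" "f x = f y"
    with enc show "x = y"
      by (cases x; cases y) (auto simp: f_def dest: inj_onD)
  qed
  have "f \<circ> Inl = Inl" by (simp add: f_def fun_eq_iff)
  then have "lang (rename_grammar f G) = map Inl ` L"
    using L lang_rename[OF cfg inj] by (simp add: image_comp)
  with cfg_rename[OF cfg inj] show ?thesis
    unfolding context_free_def by blast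
qed


section \<open>Left quotients of regular languages\<close>

definition lquot :: "'a list \<Rightarrow> 'a list set \<Rightarrow> 'a list set" where
  "lquot u L = {v. u @ v \<in> L}"

definition lquots :: "'a list set \<Rightarrow> 'a list set set" where
  "lquots L = range (\<lambda>u. lquot u L)"

lemma lquot_Nil [simp]: "lquot [] L = L"
  by (simp add: lquot_def)

lemma lquot_append: "lquot (u @ v) L = lquot v (lquot u L)"
  by (simp add: lquot_def)

lemma Nil_in_lquot_iff: "[] \<in> lquot u L \<longleftrightarrow> u \<in> L"
  by (simp add: lquot_def)

lemma lquot_in_lquots: "lquot u L \<in> lquots L"
  by (simp add: lquots_def)

lemma self_in_lquots: "L \<in> lquots L"
  using lquot_in_lquots[of "[]" L] by simp

lemma lquots_lquot_closed: "p \<in> lquots L \<Longrightarrow> lquot u p \<in> lquots L"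
  by (auto simp: lquots_def lquot_append[symmetric])

lemma finite_lquots_finite:
  assumes "finite L"
  shows "finite (lquots L)"
proof (rule finite_subset)
  show "lquots L \<subseteq> Pow (\<Union>w\<in>L. set (suffixes w))"
    by (auto simp: lquots_def lquot_def) (blast intro: suffixI)
  show "finite (Pow (\<Union>w\<in>L. set (suffixes w)))"
    using assms by simp
qed

lemma finite_lquots_Un:
  assumes "finite (lquots A)" "finite (lquots B)"
  shows "finite (lquots (A \<union> B))"
proof (rule finite_subset)
  show "lquots (A \<union> B) \<subseteq> (\<lambda>(X, Y). X \<union> Y) ` (lquots A \<times> lquots B)"
  proof
    fix Y assume "Y \<in> lquots (A \<union> B)"
    then obtain u where "Y = lquot u (A \<union> B)" by (auto simp: lquots_def)
    then have "Y = (\<lambda>(X, Y). X \<union> Y) (lquot u A, lquot u B)" by (auto simp: lquot_def)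
    then show "Y \<in> (\<lambda>(X, Y). X \<union> Y) ` (lquots A \<times> lquots B)"
      using lquot_in_lquots by blast
  qed
  show "finite ((\<lambda>(X, Y). X \<union> Y) ` (lquots A \<times> lquots B))"
    using assms by simp
qed

lemma lquot_conc:
  "lquot u (conc A B) = conc (lquot u A) B \<union> \<Union> {lquot w B | v w. u = v @ w \<and> v \<in> A}"
proof (rule set_eqI)
  fix x
  show "x \<in> lquot u (conc A B) \<longleftrightarrow>
    x \<in> conc (lquot u A) B \<union> \<Union> {lquot w B | v w. u = v @ w \<and> v \<in> A}"
  proof
    assume "x \<in> lquot u (conc A B)"
    then obtain a b where ab: "u @ x = a @ b" "a \<in> A" "b \<in> B"
      by (auto simp: lquot_def conc_def)
    then obtain us where "u = a @ us \<and> us @ x = b \<or> u @ us = a \<and> x = us @ b"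
      by (auto simp: append_eq_append_conv2)
    then show "x \<in> conc (lquot u A) B \<union> \<Union> {lquot w B | v w. u = v @ w \<and> v \<in> A}"
    proof
      assume "u = a @ us \<and> us @ x = b"
      with ab have "u = a @ us" "x \<in> lquot us B" by (auto simp: lquot_def)
      with ab(2) show ?thesis by blast
    next
      assume "u @ us = a \<and> x = us @ b"
      with ab show ?thesis by (auto simp: lquot_def conc_def)
    qed
  next
    assume "x \<in> conc (lquot u A) B \<union> \<Union> {lquot w B | v w. u = v @ w \<and> v \<in> A}"
    then show "x \<in> lquot u (conc A B)"
      by (auto simp: lquot_def conc_def) (metis append.assoc, metis)
  qed
qed

lemma finite_lquots_conc:
  assumes "finite (lquots A)" "finite (lquots B)"
  shows "finite (lquots (conc A B))"
proof (rule finite_subset)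
  let ?f = "\<lambda>(X, S). conc X B \<union> \<Union> S"
  show "lquots (conc A B) \<subseteq> ?f ` (lquots A \<times> Pow (lquots B))"
  proof
    fix Y assume "Y \<in> lquots (conc A B)"
    then obtain u where "Y = lquot u (conc A B)" by (auto simp: lquots_def)
    then have "Y = ?f (lquot u A, {lquot w B | v w. u = v @ w \<and> v \<in> A})"
      by (simp add: lquot_conc)
    moreover have "(lquot u A, {lquot w B | v w. u = v @ w \<and> v \<in> A}) \<in> lquots A \<times> Pow (lquots B)"
      by (auto simp: lquots_def)
    ultimately show "Y \<in> ?f ` (lquots A \<times> Pow (lquots B))"
      by blast
  qed
  show "finite (?f ` (lquots A \<times> Pow (lquots B)))"
    using assms by simp
qed

lemma star_append: "u \<in> star A \<Longrightarrow> v \<in> star A \<Longrightarrow> u @ v \<in> star A"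
  by (induction rule: star.induct) (auto intro: star.star_app)

lemma star_split_append:
  assumes "u @ x \<in> star A"
  shows "(x = [] \<and> u \<in> star A) \<or> (\<exists>v w. u = v @ w \<and> v \<in> star A \<and> x \<in> conc (lquot w A) (star A))"
  using assms
proof (induction "u @ x" arbitrary: u rule: star.induct)
  case star_Nil
  then show ?case by (auto intro: star.intros)
next
  case (star_app a s)
  from star_app.hyps(4) obtain us where "(a = u @ us \<and> us @ s = x) \<or> (a @ us = u \<and> s = us @ x)"
    by (auto simp: append_eq_append_conv2)
  then show ?case
  proof
    assume "a = u @ us \<and> us @ s = x"
    then have "x \<in> conc (lquot u A) (star A)"
      using star_app.hyps by (auto simp: conc_def lquot_def)
    then show ?case by (auto intro: star.intros)
  next
    assume split: "a @ us = u \<and> s = us @ x"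
    with star_app.hyps(3)
    have "(x = [] \<and> us \<in> star A) \<or> (\<exists>v w. us = v @ w \<and> v \<in> star A \<and> x \<in> conc (lquot w A) (star A))"
      by blast
    then show ?case
    proof
      assume "x = [] \<and> us \<in> star A"
      with split star_app.hyps(1) show ?case by (auto intro: star.intros)
    next
      assume "\<exists>v w. us = v @ w \<and> v \<in> star A \<and> x \<in> conc (lquot w A) (star A)"
      then obtain v w where "us = v @ w" "v \<in> star A" "x \<in> conc (lquot w A) (star A)"
        by blast
      with split star_app.hyps(1) show ?case
        by (intro disjI2 exI[of _ "a @ v"] exI[of _ w]) (auto intro: star.intros)
    qed
  qed
qed

lemma lquot_star:
  "lquot u (star A) = (if u \<in> star A then {[]} else {}) \<union>
     \<Union> ((\<lambda>X. conc X (star A)) ` {lquot w A | v w. u = v @ w \<and> v \<in> star A})"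
  (is "_ = ?R")
proof (rule set_eqI)
  fix x
  show "x \<in> lquot u (star A) \<longleftrightarrow> x \<in> ?R"
  proof
    assume "x \<in> lquot u (star A)"
    then show "x \<in> ?R"
      using star_split_append[of u x A] by (auto simp: lquot_def)
  next
    assume "x \<in> ?R"
    then consider "u \<in> star A" "x = []"
      | v w a s where "u = v @ w" "v \<in> star A" "w @ a \<in> A" "s \<in> star A" "x = a @ s"
      by (auto simp: conc_def lquot_def split: if_splits)
    then show "x \<in> lquot u (star A)"
    proof cases
      case 2
      then have "v @ ((w @ a) @ s) \<in> star A" by (meson star.star_app star_append)
      with 2 show ?thesis by (simp add: lquot_def)
    qed (simp add: lquot_def)
  qed
qed

lemma finite_lquots_star:
  assumes "finite (lquots A)"
  shows "finite (lquots (star A))"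
proof (rule finite_subset)
  let ?f = "\<lambda>(b, S). (if b then {[]} else {}) \<union> \<Union> ((\<lambda>X. conc X (star A)) ` S)"
  show "lquots (star A) \<subseteq> ?f ` (UNIV \<times> Pow (lquots A))"
  proof
    fix Y assume "Y \<in> lquots (star A)"
    then obtain u where "Y = lquot u (star A)" by (auto simp: lquots_def)
    then have "Y = ?f (u \<in> star A, {lquot w A | v w. u = v @ w \<and> v \<in> star A})"
      by (simp add: lquot_star)
    moreover have "(u \<in> star A, {lquot w A | v w. u = v @ w \<and> v \<in> star A}) \<in> UNIV \<times> Pow (lquots A)"
      by (auto simp: lquots_def)
    ultimately show "Y \<in> ?f ` (UNIV \<times> Pow (lquots A))"
      by blast
  qed
  show "finite (?f ` (UNIV \<times> Pow (lquots A)))"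
    using assms by simp
qed

lemma finite_lquots_rlang: "finite (lquots (rlang r))"
  by (induction r)
    (simp_all add: finite_lquots_finite finite_lquots_Un finite_lquots_conc finite_lquots_star)


section \<open>The triple construction\<close>

type_synonym 'a finalizing_symbol = "'a + ('a list set \<times> 'a \<times> 'a list set) option"

abbreviation start_symbol :: "'a finalizing_symbol" where
  "start_symbol \<equiv> Inr None"

abbreviation triple :: "'a list set \<Rightarrow> 'a \<Rightarrow> 'a list set \<Rightarrow> 'a finalizing_symbol" where
  "triple p X q \<equiv> Inr (Some (p, X, q))"

locale regular_finalization =
  fixes G :: "'a grammar" and W :: "'a set" and F :: "'a list set"
  assumes cfg: "cfg G" and finite_lquots_F: "finite (lquots F)"
begin

definition next_state :: "'a list set \<Rightarrow> 'a \<Rightarrow> 'a list set" where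
  "next_state p X = (if X \<in> W then lquot [X] p else p)"

definition emit :: "'a \<Rightarrow> 'a finalizing_symbol list" where
  "emit X = (if X \<in> Ts G then [Inl X] else [])"

text \<open>\<open>encodes p u q t\<close>: \<open>t\<close> arises from the sentential form \<open>u\<close> of \<open>G\<close> by replacing each
  symbol \<open>X\<close> either by a triple \<open>(p\<^sub>i, X, p\<^sub>i\<^sub>+\<^sub>1)\<close>, or, if \<open>X\<close> may survive in a finalized
  form (\<open>X \<in> T \<union> W\<close>), by its terminal image, where the quotient of \<open>F\<close> is advanced along
  the \<open>W\<close>-projection; the states run from \<open>p\<^sub>0 = p\<close> to \<open>q\<close>.\<close>
fun encodes :: "'a list set \<Rightarrow> 'a list \<Rightarrow> 'a list set \<Rightarrow> 'a finalizing_symbol list \<Rightarrow> bool" where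
  "encodes p [] q t \<longleftrightarrow> p = q \<and> t = []"
| "encodes p (X # xs) q t \<longleftrightarrow> (\<exists>r t'. r \<in> lquots F \<and> encodes r xs q t' \<and>
     (t = triple p X r # t' \<or> X \<in> Ts G \<union> W \<and> r = next_state p X \<and> t = emit X @ t'))"

definition finalizing_grammar :: "'a finalizing_symbol grammar" where
  "finalizing_grammar =
    \<lparr>Vs = Inl ` Ts G \<union> Inr ` ({None} \<union> Some ` (lquots F \<times> Vs G \<times> lquots F)),
     Ts = Inl ` Ts G,
     Ps = {(start_symbol, t) | t q. q \<in> lquots F \<and> [] \<in> q \<and> encodes F [St G] q t}
       \<union> {(triple p A q, t) | p A \<alpha> q t.
            (A, \<alpha>) \<in> Ps G \<and> p \<in> lquots F \<and> q \<in> lquots F \<and> encodes p \<alpha> q t},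
     St = start_symbol\<rparr>"

lemma encodes_append:
  "encodes p (u @ v) q t \<longleftrightarrow> (\<exists>r t1 t2. t = t1 @ t2 \<and> encodes p u r t1 \<and> encodes r v q t2)"
proof (induction u arbitrary: p t)
  case (Cons X xs)
  show ?case
  proof
    assume "encodes p ((X # xs) @ v) q t"
    then obtain r t' where r: "r \<in> lquots F" "encodes r (xs @ v) q t'"
      "t = triple p X r # t' \<or> X \<in> Ts G \<union> W \<and> r = next_state p X \<and> t = emit X @ t'"
      by auto
    from r(2) Cons.IH obtain r' t1 t2 where
      split: "t' = t1 @ t2" "encodes r xs r' t1" "encodes r' v q t2"
      by blast
    from r(3) obtain h where h: "t = h @ t'" "encodes p (X # xs) r' (h @ t1)"
    proof
      assume "t = triple p X r # t'"
      with r(1) split(2) that[of "[triple p X r]"] show thesis by auto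
    next
      assume "X \<in> Ts G \<union> W \<and> r = next_state p X \<and> t = emit X @ t'"
      with r(1) split(2) that[of "emit X"] show thesis by auto
    qed
    have "t = (h @ t1) @ t2" using h(1) split(1) by simp
    with h(2) split(3) show "\<exists>r t1 t2. t = t1 @ t2 \<and> encodes p (X # xs) r t1 \<and> encodes r v q t2"
      by blast
  next
    assume "\<exists>r t1 t2. t = t1 @ t2 \<and> encodes p (X # xs) r t1 \<and> encodes r v q t2"
    then obtain r' t1 t2 where t: "t = t1 @ t2" "encodes p (X # xs) r' t1" "encodes r' v q t2"
      by blast
    from t(2) obtain r t' where r: "r \<in> lquots F" "encodes r xs r' t'"
      "t1 = triple p X r # t' \<or> X \<in> Ts G \<union> W \<and> r = next_state p X \<and> t1 = emit X @ t'"
      by auto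
    have "encodes r (xs @ v) q (t' @ t2)" using Cons.IH r(2) t(3) by blast
    with r(1,3) t(1) show "encodes p ((X # xs) @ v) q t"
      unfolding append_Cons encodes.simps(2)
      by (intro exI[of _ r] exI[of _ "t' @ t2"]) auto
  qed
qed auto

lemma encodes_lquots: "encodes p u q t \<Longrightarrow> p \<in> lquots F \<Longrightarrow> q \<in> lquots F"
  by (induction u arbitrary: p t) auto

lemma start_symbol_notin_encodes: "encodes p u q t \<Longrightarrow> start_symbol \<notin> set t"
  by (induction u arbitrary: p t) (auto simp: emit_def)

lemma encodes_symbols:
  "encodes p u q t \<Longrightarrow> p \<in> lquots F \<Longrightarrow> u \<in> lists (Vs G) \<Longrightarrow>
    set t \<subseteq> Vs finalizing_grammar \<and> length t \<le> length u"
proof (induction u arbitrary: p t)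
  case (Cons X xs)
  from Cons.prems(1) obtain r t' where r: "r \<in> lquots F" "encodes r xs q t'"
    "t = triple p X r # t' \<or> X \<in> Ts G \<union> W \<and> r = next_state p X \<and> t = emit X @ t'"
    by auto
  have "set t' \<subseteq> Vs finalizing_grammar \<and> length t' \<le> length xs"
    using Cons.IH[OF r(2,1)] Cons.prems(3) by simp
  with r(1,3) Cons.prems(2,3) show ?case
    by (auto simp: finalizing_grammar_def emit_def)
qed simp

lemma encodes_split:
  "encodes p v q (x @ [triple p' A r'] @ z) \<Longrightarrow>
    \<exists>v1 v2. v = v1 @ [A] @ v2 \<and> encodes p v1 p' x \<and> r' \<in> lquots F \<and> encodes r' v2 q z"
proof (induction v arbitrary: p x)
  case (Cons X xs)
  then obtain r t' where r: "r \<in> lquots F" "encodes r xs q t'"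
    "x @ [triple p' A r'] @ z = triple p X r # t' \<or>
     X \<in> Ts G \<union> W \<and> r = next_state p X \<and> x @ [triple p' A r'] @ z = emit X @ t'"
    by auto
  from r(3) show ?case
  proof
    assume split: "x @ [triple p' A r'] @ z = triple p X r # t'"
    show ?case
    proof (cases "x = []")
      case True
      with split r show ?thesis by (intro exI[of _ "[]"] exI[of _ xs]) auto
    next
      case False
      with split obtain x' where x': "x = triple p X r # x'" "t' = x' @ [triple p' A r'] @ z"
        by (cases x) auto
      with Cons.IH r(2) obtain v1 v2 where
        "xs = v1 @ [A] @ v2" "encodes r v1 p' x'" "r' \<in> lquots F" "encodes r' v2 q z"
        by blast
      with r(1) x'(1) show ?thesis
        by (intro exI[of _ "X # v1"] exI[of _ v2]) auto
    qed
  next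
    assume fin: "X \<in> Ts G \<union> W \<and> r = next_state p X \<and> x @ [triple p' A r'] @ z = emit X @ t'"
    then obtain x' where x': "x = emit X @ x'" "t' = x' @ [triple p' A r'] @ z"
      by (cases "X \<in> Ts G"; cases x) (auto simp: emit_def)
    with Cons.IH r(2) obtain v1 v2 where
      "xs = v1 @ [A] @ v2" "encodes r v1 p' x'" "r' \<in> lquots F" "encodes r' v2 q z"
      by blast
    with fin r(1) x'(1) show ?thesis
      by (intro exI[of _ "X # v1"] exI[of _ v2]) auto
  qed
qed simp

lemma emit_append_proj: "emit X @ map Inl (proj (Ts G) xs) = map Inl (proj (Ts G) (X # xs))"
  by (simp add: emit_def proj_def)

lemma lquot_next_state: "lquot (proj W xs) (next_state p X) = lquot (proj W (X # xs)) p"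
  by (simp add: proj_def next_state_def lquot_def)

lemma encodes_terminal_word:
  "encodes p v q t \<Longrightarrow> t \<in> lists (range Inl) \<Longrightarrow>
    v \<in> lists (Ts G \<union> W) \<and> t = map Inl (proj (Ts G) v) \<and> q = lquot (proj W v) p"
proof (induction v arbitrary: p t)
  case (Cons X xs)
  from Cons.prems obtain t' where
    X: "X \<in> Ts G \<union> W" and xs: "encodes (next_state p X) xs q t'" and t: "t = emit X @ t'"
    by auto
  with Cons.prems(2) have "t' \<in> lists (range Inl)" by simp
  with Cons.IH[OF xs] X t show ?case
    using emit_append_proj[of X xs] lquot_next_state[of xs p X] by simp
qed (simp add: proj_def)

lemma encodes_finalized:
  "v \<in> lists (Ts G \<union> W) \<Longrightarrow> p \<in> lquots F \<Longrightarrow>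
    encodes p v (lquot (proj W v) p) (map Inl (proj (Ts G) v))"
proof (induction v arbitrary: p)
  case (Cons X xs)
  then have X: "X \<in> Ts G \<union> W" and r: "next_state p X \<in> lquots F"
    by (simp_all add: next_state_def lquots_lquot_closed)
  have "encodes (next_state p X) xs (lquot (proj W xs) (next_state p X)) (map Inl (proj (Ts G) xs))"
    using Cons r by simp
  then show ?case
    unfolding lquot_next_state[symmetric] emit_append_proj[symmetric] encodes.simps(2)
    using X r by blast
qed (simp add: proj_def)

lemma cfg_finalizing_grammar: "cfg finalizing_grammar"
proof -
  let ?G' = finalizing_grammar
  have finite: "finite (Vs G)" "finite (Ps G)" "Ts G \<subseteq> Vs G"
    and St_G: "St G \<in> Vs G" "St G \<notin> Ts G"
    and rules: "\<And>A \<alpha>. (A, \<alpha>) \<in> Ps G \<Longrightarrow> A \<in> Vs G \<and> A \<notin> Ts G \<and> \<alpha> \<in> lists (Vs G)"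
    using cfg unfolding cfg_def Ns_def by auto
  have finite_Vs: "finite (Vs ?G')"
    using finite finite_lquots_F finite_subset[OF finite(3,1)]
    by (simp add: finalizing_grammar_def)
  define M where "M = Max (length ` insert [St G] (snd ` Ps G))"
  have M: "length \<alpha> \<le> M" if "\<alpha> \<in> insert [St G] (snd ` Ps G)" for \<alpha>
    unfolding M_def using finite(2) that by (intro Max_ge) auto
  have rules': "Ps ?G' \<subseteq> (Vs ?G' - Ts ?G') \<times> {t. set t \<subseteq> Vs ?G' \<and> length t \<le> M}"
  proof
    fix R assume "R \<in> Ps ?G'"
    then consider (start) t q where "R = (start_symbol, t)" "encodes F [St G] q t"
      | (triple) p A \<alpha> q t where "R = (triple p A q, t)" "(A, \<alpha>) \<in> Ps G" "p \<in> lquots F"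
          "q \<in> lquots F" "encodes p \<alpha> q t"
      unfolding finalizing_grammar_def by auto
    then show "R \<in> (Vs ?G' - Ts ?G') \<times> {t. set t \<subseteq> Vs ?G' \<and> length t \<le> M}"
    proof cases
      case start
      from start(2) self_in_lquots St_G have "set t \<subseteq> Vs ?G' \<and> length t \<le> length [St G]"
        by (intro encodes_symbols) simp_all
      with start(1) M[of "[St G]"] show ?thesis
        by (auto simp: finalizing_grammar_def)
    next
      case triple
      from triple(5,3) rules[OF triple(2)] have "set t \<subseteq> Vs ?G' \<and> length t \<le> length \<alpha>"
        by (intro encodes_symbols) simp_all
      with triple(1-4) rules[OF triple(2)] M[of \<alpha>] show ?thesis
        by (force simp: finalizing_grammar_def)
    qed
  qed
  then have "finite (Ps ?G')"
    using finite_Vs finite_lists_length_le[OF finite_Vs, of M]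
    by (meson finite_Diff finite_SigmaI finite_subset)
  moreover have "Ts ?G' \<subseteq> Vs ?G'" "St ?G' \<in> Vs ?G' - Ts ?G'"
    by (auto simp: finalizing_grammar_def)
  ultimately show ?thesis
    using finite_Vs rules' unfolding cfg_def Ns_def by blast
qed

lemma start_rule_iff:
  "(start_symbol, t) \<in> Ps finalizing_grammar \<longleftrightarrow> (\<exists>q. [] \<in> q \<and> encodes F [St G] q t)"
  using encodes_lquots[OF _ self_in_lquots]
  by (auto simp: finalizing_grammar_def simp del: encodes.simps)

lemma triple_rule_iff:
  "(triple p A q, t) \<in> Ps finalizing_grammar \<longleftrightarrow>
    (\<exists>\<alpha>. (A, \<alpha>) \<in> Ps G \<and> p \<in> lquots F \<and> q \<in> lquots F \<and> encodes p \<alpha> q t)"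
  by (auto simp: finalizing_grammar_def simp del: encodes.simps)

lemma finalizing_rule_lhs:
  "(B, t) \<in> Ps finalizing_grammar \<Longrightarrow> B = start_symbol \<or> (\<exists>p A q. B = triple p A q)"
  by (auto simp: finalizing_grammar_def simp del: encodes.simps)

lemma derives_start_encodes:
  "derives finalizing_grammar [start_symbol] t \<Longrightarrow>
    t = [start_symbol] \<or> (\<exists>v q. derives G [St G] v \<and> [] \<in> q \<and> encodes F v q t)"
  unfolding derives_def
proof (induction rule: rtranclp_induct)
  case (step y z)
  from step.hyps(2) obtain x B \<beta> w where
    rule: "(B, \<beta>) \<in> Ps finalizing_grammar" and y: "y = x @ [B] @ w" and z: "z = x @ \<beta> @ w"
    by (auto simp: step_def)
  from step.IH show ?case
  proof
    assume "y = [start_symbol]"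
    with y have "x = []" "B = start_symbol" "w = []"
      by (auto simp: Cons_eq_append_conv append_eq_Cons_conv)
    with rule z have "(start_symbol, z) \<in> Ps finalizing_grammar" by simp
    then obtain q where "[] \<in> q" "encodes F [St G] q z"
      using start_rule_iff by blast
    then show ?case unfolding derives_def by blast
  next
    assume "\<exists>v q. (step G)\<^sup>*\<^sup>* [St G] v \<and> [] \<in> q \<and> encodes F v q y"
    then obtain v q where v: "(step G)\<^sup>*\<^sup>* [St G] v" "[] \<in> q" "encodes F v q y"
      by blast
    have "B \<noteq> start_symbol" using start_symbol_notin_encodes[OF v(3)] y by auto
    with finalizing_rule_lhs[OF rule] obtain p A r where B: "B = triple p A r"
      by blast
    with rule obtain \<alpha> where \<alpha>: "(A, \<alpha>) \<in> Ps G" "encodes p \<alpha> r \<beta>"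
      using triple_rule_iff by blast
    from encodes_split[of F v q x p A r w] v(3) y B(1) obtain v1 v2 where
      v12: "v = v1 @ [A] @ v2" "encodes F v1 p x" "encodes r v2 q w"
      by auto
    have "encodes F (v1 @ \<alpha> @ v2) q z"
      unfolding z encodes_append using v12(2,3) \<alpha>(2) by blast
    moreover have "step G v (v1 @ \<alpha> @ v2)"
      unfolding v12(1) using \<alpha>(1) by (rule step_ruleI)
    ultimately show ?case
      using v(1,2) unfolding derives_def by (blast intro: rtranclp.rtrancl_into_rtrancl)
  qed
qed simp

lemma derives_encodes:
  "derives G [St G] v \<Longrightarrow> encodes F v q t \<Longrightarrow> [] \<in> q \<Longrightarrow>
    derives finalizing_grammar [start_symbol] t"
  unfolding derives_def
proof (induction arbitrary: q t rule: rtranclp_induct)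
  case base
  then have "(start_symbol, t) \<in> Ps finalizing_grammar"
    using start_rule_iff by blast
  then have "step finalizing_grammar ([] @ [start_symbol] @ []) ([] @ t @ [])"
    by (rule step_ruleI)
  then show ?case by simp
next
  case (step y z)
  from step.hyps(2) obtain x A \<alpha> w where
    rule: "(A, \<alpha>) \<in> Ps G" and y: "y = x @ [A] @ w" and z: "z = x @ \<alpha> @ w"
    by (auto simp: step_def)
  from step.prems(1) obtain p r t1 t2 t3 where
    t: "t = t1 @ t2 @ t3" "encodes F x p t1" "encodes p \<alpha> r t2" "encodes r w q t3"
    unfolding z encodes_append by blast
  have p: "p \<in> lquots F" and r: "r \<in> lquots F"
    using encodes_lquots[OF t(2) self_in_lquots] encodes_lquots[OF t(3)] by blast+
  from r have "encodes p [A] r [triple p A r]" by simp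
  with t(2,4) have "encodes F y q (t1 @ [triple p A r] @ t3)"
    unfolding y encodes_append by blast
  with step.IH step.prems(2)
  have "(step finalizing_grammar)\<^sup>*\<^sup>* [start_symbol] (t1 @ [triple p A r] @ t3)"
    by blast
  moreover have "step finalizing_grammar (t1 @ [triple p A r] @ t3) t"
    unfolding t(1) using rule p r t(3) triple_rule_iff by (blast intro: step_ruleI)
  ultimately show ?case by (rule rtranclp.rtrancl_into_rtrancl)
qed

lemma lang_finalizing_grammar: "lang finalizing_grammar = map Inl ` lang_fin G W F"
proof
  have Ts': "Ts finalizing_grammar = Inl ` Ts G" and St': "St finalizing_grammar = start_symbol"
    by (simp_all add: finalizing_grammar_def)
  show "lang finalizing_grammar \<subseteq> map Inl ` lang_fin G W F"
  proof
    fix t assume "t \<in> lang finalizing_grammar"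
    then have t: "t \<in> lists (Inl ` Ts G)" "derives finalizing_grammar [start_symbol] t"
      unfolding lang_def Ts' St' by blast+
    then have "t \<noteq> [start_symbol]" by auto
    with derives_start_encodes[OF t(2)] obtain v q where
      v: "derives G [St G] v" "[] \<in> q" "encodes F v q t"
      by blast
    from t(1) have "t \<in> lists (range Inl)" by auto
    from encodes_terminal_word[OF v(3) this] have
      fin: "v \<in> lists (Ts G \<union> W)" "t = map Inl (proj (Ts G) v)" "q = lquot (proj W v) F"
      by auto
    have "proj W v \<in> F" using v(2) fin(3) Nil_in_lquot_iff by auto
    moreover have "proj (Ns G - W) v = []"
      using fin(1) unfolding proj_def Ns_def by (auto simp: filter_empty_conv)
    ultimately have "proj (Ts G) v \<in> lang_fin G W F"
      using v(1) unfolding lang_fin_def sentential_fin_def sentential_def by blast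
    with fin(2) show "t \<in> map Inl ` lang_fin G W F" by blast
  qed
  show "map Inl ` lang_fin G W F \<subseteq> lang finalizing_grammar"
  proof
    fix t :: "'a finalizing_symbol list" assume "t \<in> map Inl ` lang_fin G W F"
    then obtain v where v: "t = map Inl (proj (Ts G) v)" "derives G [St G] v" "proj W v \<in> F"
      "proj (Ns G - W) v = []"
      unfolding lang_fin_def sentential_fin_def sentential_def by blast
    have "[St G] \<in> lists (Vs G)" using cfg unfolding cfg_def Ns_def by auto
    with v(2) have "v \<in> lists (Vs G)" using derives_lists_Vs[OF cfg] by blast
    with v(4) have "v \<in> lists (Ts G \<union> W)"
      unfolding proj_def Ns_def by (auto simp: filter_empty_conv)
    then have "encodes F v (lquot (proj W v) F) t"
      using encodes_finalized[OF _ self_in_lquots] v(1) by simp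
    moreover have "[] \<in> lquot (proj W v) F" using v(3) Nil_in_lquot_iff by auto
    ultimately have "derives finalizing_grammar [start_symbol] t"
      using derives_encodes[OF v(2)] by blast
    moreover have "t \<in> lists (Inl ` Ts G)" using v(1) by (auto simp: proj_def)
    ultimately show "t \<in> lang finalizing_grammar" unfolding lang_def Ts' St' by blast
  qed
qed

end

theorem lemma1:
  fixes G :: "'a grammar" and W :: "'a set" and F :: "'a list set"
  assumes "cfg G"
    and "W \<subseteq> Vs G"
    and "F \<subseteq> lists W"
    and "regular F"
  shows "context_free (lang_fin G W F)"
proof -
  from \<open>regular F\<close> obtain r where "rlang r = F" unfolding regular_def by blast
  then have "finite (lquots F)" using finite_lquots_rlang by blast
  with \<open>cfg G\<close> interpret regular_finalization G W F
    by unfold_locales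
  show ?thesis
    using context_free_of_grammar cfg_finalizing_grammar lang_finalizing_grammar by blast
qed

end
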